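(* Consider the two-player game described in the context, with initial state $\mathbf{x}=(x,y)$. An equilibrium (Nash) pair of policies is $$(\psi_{\rm NE},T_{\rm NE})=\Big(\cos^{-1}\mu,\ \max\Big\{x-\tfrac{\mu}{\sqrt{1-\mu^2}}\,y,\ 0\Big\}\Big),$$ where $\psi_{\rm NE}$ means the Evader holds the constant heading $\cos^{-1}\mu$.
   Context: Pursuer-fixed frame: the Evader's relative position $\mathbf{x}(t)=(x(t),y(t))\in\mathbb{R}^2$ evolves as $\dot x=\mu\cos\psi(t)-1$, $\dot y=\mu\sin\psi(t)$, with $\mu\in(0,1)$. Game: the Evader chooses its heading trajectory $\psi(\cdot)$ subject to the constraint $\|\mathbf{x}(t)\|\ge1$ on $[0,T]$, and the Pursuer chooses the final time $T\ge0$; the payoff is the final distance $\|\mathbf{x}(T)\|$, which the Evader maximizes and the Pursuer minimizes. An equilibrium pair is one from which neither player benefits by unilateral deviation. The paper assumes $y\ge0$ throughout.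
   Formalization: The initial state $\mathbf{x}=(x,y)$ must moreover satisfy $\|\mathbf{x}\|\ge1$ and, whenever $T_{\rm NE}>0$, $\mu x+\sqrt{1-\mu^2} y\ge1$. The paper assumes this as well. *)

theory Defs
  imports "HOL-Analysis.Analysis"
begin

text \<open>Relative velocity in the Pursuer-fixed frame for Evader heading theta.\<close>
definition vel :: "real \<Rightarrow> real \<Rightarrow> real \<times> real" where
  "vel \<mu> \<theta> = (\<mu> * cos \<theta> - 1, \<mu> * sin \<theta>)"

definition traj :: "real \<Rightarrow> real \<times> real \<Rightarrow> (real \<Rightarrow> real) \<Rightarrow> real \<Rightarrow> real \<times> real" where
  "traj \<mu> x0 \<psi> t = x0 + integral {0..t} (\<lambda>s. vel \<mu> (\<psi> s))"

definition admissible :: "real \<Rightarrow> real \<times> real \<Rightarrow> (real \<Rightarrow> real) \<Rightarrow> real \<Rightarrow> bool" where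
  "admissible \<mu> x0 \<psi> T \<longleftrightarrow> 0 \<le> T \<and>
     (\<forall>t\<in>{0..T}. (\<lambda>s. vel \<mu> (\<psi> s)) integrable_on {0..t} \<and> 1 \<le> norm (traj \<mu> x0 \<psi> t))"

definition payoff :: "real \<Rightarrow> real \<times> real \<Rightarrow> (real \<Rightarrow> real) \<Rightarrow> real \<Rightarrow> real" where
  "payoff \<mu> x0 \<psi> T = norm (traj \<mu> x0 \<psi> T)"

definition is_equilibrium :: "real \<Rightarrow> real \<times> real \<Rightarrow> (real \<Rightarrow> real) \<Rightarrow> real \<Rightarrow> bool" where
  "is_equilibrium \<mu> x0 \<psi> T \<longleftrightarrow> admissible \<mu> x0 \<psi> T \<and>
     (\<forall>T'. admissible \<mu> x0 \<psi> T' \<longrightarrow> payoff \<mu> x0 \<psi> T \<le> payoff \<mu> x0 \<psi> T') \<and>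
     (\<forall>\<psi>'. admissible \<mu> x0 \<psi>' T \<longrightarrow> payoff \<mu> x0 \<psi>' T \<le> payoff \<mu> x0 \<psi> T)"

end

theory Submission
  imports Defs
begin

text \<open>
  For the heading \<open>\<theta> = arccos \<mu>\<close> the relative velocity
  \<open>sin \<theta> *\<^sub>R (- sin \<theta>, cos \<theta>)\<close> is orthogonal to the heading
  \<open>u = (cos \<theta>, sin \<theta>)\<close>, so the relative motion runs along a straight line whose
  point closest to the origin, \<open>(\<mu> x + sin \<theta> y) u\<close>, is passed at time
  \<open>x - \<mu> / sin \<theta> * y\<close>. Stopping there (or at once, if that time is negative) is
  therefore the Pursuer's best reply, and the state constraint holds because the distance
  never drops below \<open>\<bar>\<mu> x + sin \<theta> y\<bar>\<close>.
  Conversely, whatever the Evader does, at time \<open>T\<close> its position is \<open>x\<^sub>0 - (T, 0)\<close>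
  plus a displacement of length at most \<open>\<mu> T\<close>. At the stopping time \<open>x\<^sub>0 - (T, 0)\<close>
  is a nonnegative multiple of \<open>u\<close>, so moving along \<open>u\<close> attains this bound.
\<close>

lemma vel_eq_heading: "vel \<mu> \<theta> = \<mu> *\<^sub>R (cos \<theta>, sin \<theta>) - (1, 0)"
  by (simp add: vel_def)

lemma norm_heading [simp]: "norm (cos \<theta> :: real, sin \<theta>) = 1"
  by (simp add: norm_Pair)

lemma traj_const_heading:
  assumes "0 \<le> t"
  shows "traj \<mu> x0 (\<lambda>_. \<theta>) t = x0 + t *\<^sub>R vel \<mu> \<theta>"
  using assms by (simp add: traj_def)

lemma norm_traj_le:
  assumes "0 \<le> \<mu>" and "0 \<le> T" and int: "(\<lambda>s. vel \<mu> (\<psi> s)) integrable_on {0..T}"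
  shows "norm (traj \<mu> x0 \<psi> T) \<le> norm (x0 - (T, 0)) + \<mu> * T"
proof -
  define g where "g s = \<mu> *\<^sub>R (cos (\<psi> s), sin (\<psi> s))" for s
  have vel_g: "vel \<mu> (\<psi> s) = g s - (1, 0)" for s
    by (simp add: g_def vel_eq_heading)
  have g_int: "g integrable_on {0..T}"
    using integrable_add[OF int integrable_const_ivl[of "(1::real, 0::real)"]]
    by (simp add: vel_g)
  have bound: "norm (integral {0..T} g) \<le> \<mu> * T"
    using has_integral_bound_real[of \<mu> "{}" g "integral {0..T} g" 0 T] assms(1,2) g_int
    by (simp add: g_def norm_scaleR has_integral_integral del: scaleR_Pair)
  have "traj \<mu> x0 \<psi> T = (x0 - (T, 0)) + integral {0..T} g"
    using assms(2) by (simp add: traj_def vel_g integral_diff[OF g_int integrable_const_ivl])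
  then have "norm (traj \<mu> x0 \<psi> T) \<le> norm (x0 - (T, 0)) + norm (integral {0..T} g)"
    by (simp only: norm_triangle_ineq)
  with bound show ?thesis
    by linarith
qed

lemma norm_traj_const_heading_eq:
  assumes "0 \<le> \<mu>" and "0 \<le> T" and "0 \<le> c"
    and "x0 - (T, 0) = c *\<^sub>R (cos \<theta>, sin \<theta>)"
  shows "norm (traj \<mu> x0 (\<lambda>_. \<theta>) T) = norm (x0 - (T, 0)) + \<mu> * T"
proof -
  have "traj \<mu> x0 (\<lambda>_. \<theta>) T = (x0 - (T, 0)) + (\<mu> * T) *\<^sub>R (cos \<theta>, sin \<theta>)"
    using assms(2) by (simp add: traj_const_heading vel_eq_heading algebra_simps)
  also have "\<dots> = (c + \<mu> * T) *\<^sub>R (cos \<theta>, sin \<theta>)"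
    by (simp add: assms(4) algebra_simps)
  finally show ?thesis
    using assms by (simp add: norm_scaleR del: scaleR_Pair)
qed

lemma norm_line_power2:
  fixes p v :: "'a::real_inner"
  assumes "inner (p + t0 *\<^sub>R v) v = 0"
  shows "(norm (p + t *\<^sub>R v))\<^sup>2 = (norm (p + t0 *\<^sub>R v))\<^sup>2 + (t - t0)\<^sup>2 * (norm v)\<^sup>2"
proof -
  define q where "q = p + t0 *\<^sub>R v"
  have "p + t *\<^sub>R v = q + (t - t0) *\<^sub>R v"
    by (simp add: q_def algebra_simps)
  then show ?thesis
    using assms unfolding q_def[symmetric] power2_norm_eq_inner
    by (simp add: inner_add_left inner_add_right inner_commute power2_eq_square)
qed

lemma norm_line_foot_le:
  fixes p v :: "'a::real_inner"
  assumes "inner (p + t0 *\<^sub>R v) v = 0"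
  shows "norm (p + t0 *\<^sub>R v) \<le> norm (p + t *\<^sub>R v)"
proof (rule power2_le_imp_le)
  show "(norm (p + t0 *\<^sub>R v))\<^sup>2 \<le> (norm (p + t *\<^sub>R v))\<^sup>2"
    using norm_line_power2[OF assms, of t] by simp
qed simp

lemma norm_line_min_nonneg:
  fixes p v :: "'a::real_inner"
  assumes "inner (p + t0 *\<^sub>R v) v = 0" and "0 \<le> t"
  shows "norm (p + max t0 0 *\<^sub>R v) \<le> norm (p + t *\<^sub>R v)"
proof -
  have "\<bar>max t0 0 - t0\<bar> \<le> \<bar>t - t0\<bar>"
    using assms(2) by linarith
  then have "(max t0 0 - t0)\<^sup>2 * (norm v)\<^sup>2 \<le> (t - t0)\<^sup>2 * (norm v)\<^sup>2"
    unfolding abs_le_square_iff by (rule mult_right_mono) simp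
  then have "(norm (p + max t0 0 *\<^sub>R v))\<^sup>2 \<le> (norm (p + t *\<^sub>R v))\<^sup>2"
    using norm_line_power2[OF assms(1), of "max t0 0"] norm_line_power2[OF assms(1), of t]
    by linarith
  then show ?thesis
    by (rule power2_le_imp_le) simp
qed

lemma vel_interception: "vel (cos \<theta>) \<theta> = sin \<theta> *\<^sub>R (- sin \<theta>, cos \<theta>)"
  by (simp add: vel_def cos_squared_eq power2_eq_square algebra_simps)

context
  fixes \<theta> x y :: real
  assumes sin_pos: "0 < sin \<theta>"
begin

abbreviation closest_time :: real where
  "closest_time \<equiv> x - cos \<theta> / sin \<theta> * y"

lemma interception_foot:
  "(x, y) + closest_time *\<^sub>R vel (cos \<theta>) \<theta> = (cos \<theta> * x + sin \<theta> * y) *\<^sub>R (cos \<theta>, sin \<theta>)"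
  using sin_pos
  by (simp add: vel_interception field_simps) (use sin_cos_squared_add3[of \<theta>] in algebra)

lemma interception_offset:
  "(x, y) - (closest_time, 0) = (y / sin \<theta>) *\<^sub>R (cos \<theta>, sin \<theta>)"
  using sin_pos by simp

lemma interception_orthogonal:
  "inner ((x, y) + closest_time *\<^sub>R vel (cos \<theta>) \<theta>) (vel (cos \<theta>) \<theta>) = 0"
  unfolding interception_foot by (simp add: vel_interception algebra_simps)

lemma payoff_interception_min:
  assumes "0 \<le> t"
  shows "payoff (cos \<theta>) (x, y) (\<lambda>_. \<theta>) (max closest_time 0) \<le> payoff (cos \<theta>) (x, y) (\<lambda>_. \<theta>) t"
  using norm_line_min_nonneg[OF interception_orthogonal assms] assms
  by (simp add: payoff_def traj_const_heading)

lemma norm_traj_interception_ge: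
  assumes "0 \<le> t"
  shows "\<bar>cos \<theta> * x + sin \<theta> * y\<bar> \<le> norm (traj (cos \<theta>) (x, y) (\<lambda>_. \<theta>) t)"
proof -
  have "\<bar>cos \<theta> * x + sin \<theta> * y\<bar> = norm ((x, y) + closest_time *\<^sub>R vel (cos \<theta>) \<theta>)"
    by (simp only: interception_foot norm_scaleR norm_heading mult_1_right)
  also have "\<dots> \<le> norm ((x, y) + t *\<^sub>R vel (cos \<theta>) \<theta>)"
    by (rule norm_line_foot_le[OF interception_orthogonal])
  also have "\<dots> = norm (traj (cos \<theta>) (x, y) (\<lambda>_. \<theta>) t)"
    using assms by (simp add: traj_const_heading)
  finally show ?thesis .
qed

lemma admissible_interception:
  assumes "1 \<le> norm (x, y)" and "0 < closest_time \<longrightarrow> 1 \<le> cos \<theta> * x + sin \<theta> * y"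
  shows "admissible (cos \<theta>) (x, y) (\<lambda>_. \<theta>) (max closest_time 0)"
  unfolding admissible_def
proof (intro conjI ballI)
  fix t assume t: "t \<in> {0..max closest_time 0}"
  show "(\<lambda>s. vel (cos \<theta>) \<theta>) integrable_on {0..t}"
    by (rule integrable_const_ivl)
  show "1 \<le> norm (traj (cos \<theta>) (x, y) (\<lambda>_. \<theta>) t)"
  proof (cases "0 < closest_time")
    case True
    then show ?thesis
      using assms(2) norm_traj_interception_ge[of t] t by simp
  next
    case False
    then show ?thesis
      using assms(1) t by (simp add: traj_def)
  qed
qed simp

lemma payoff_interception_eq:
  assumes "0 \<le> \<mu>" and "0 \<le> y"
  shows "payoff \<mu> (x, y) (\<lambda>_. \<theta>) (max closest_time 0)
    = norm ((x, y) - (max closest_time 0, 0)) + \<mu> * max closest_time 0"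
proof (cases "0 < closest_time")
  case True
  then show ?thesis
    using norm_traj_const_heading_eq[OF assms(1) _ _ interception_offset] assms(2) sin_pos
    by (simp add: payoff_def)
next
  case False
  then show ?thesis
    by (simp add: payoff_def traj_def)
qed

lemma is_equilibrium_interception:
  assumes "0 \<le> cos \<theta>" and "0 \<le> y" and "1 \<le> norm (x, y)"
    and "0 < closest_time \<longrightarrow> 1 \<le> cos \<theta> * x + sin \<theta> * y"
  shows "is_equilibrium (cos \<theta>) (x, y) (\<lambda>_. \<theta>) (max closest_time 0)"
  unfolding is_equilibrium_def
proof (intro conjI allI impI)
  show "admissible (cos \<theta>) (x, y) (\<lambda>_. \<theta>) (max closest_time 0)"
    using admissible_interception assms(3,4) .
next
  fix T assume "admissible (cos \<theta>) (x, y) (\<lambda>_. \<theta>) T"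
  then show "payoff (cos \<theta>) (x, y) (\<lambda>_. \<theta>) (max closest_time 0) \<le> payoff (cos \<theta>) (x, y) (\<lambda>_. \<theta>) T"
    by (intro payoff_interception_min) (simp add: admissible_def)
next
  fix \<psi> assume "admissible (cos \<theta>) (x, y) \<psi> (max closest_time 0)"
  then have "(\<lambda>s. vel (cos \<theta>) (\<psi> s)) integrable_on {0..max closest_time 0}"
    by (simp add: admissible_def)
  then have "payoff (cos \<theta>) (x, y) \<psi> (max closest_time 0)
      \<le> norm ((x, y) - (max closest_time 0, 0)) + cos \<theta> * max closest_time 0"
    unfolding payoff_def using assms(1) by (intro norm_traj_le) simp_all
  also have "\<dots> = payoff (cos \<theta>) (x, y) (\<lambda>_. \<theta>) (max closest_time 0)"
    using assms(1,2) by (simp only: payoff_interception_eq)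
  finally show "payoff (cos \<theta>) (x, y) \<psi> (max closest_time 0)
      \<le> payoff (cos \<theta>) (x, y) (\<lambda>_. \<theta>) (max closest_time 0)" .
qed

end

theorem theorem3:
  fixes \<mu> x y :: real
  assumes "0 < \<mu>" and "\<mu> < 1" and "0 \<le> y"
    and "1 \<le> norm (x, y)"
    and "0 < x - \<mu> / sqrt (1 - \<mu>\<^sup>2) * y \<longrightarrow> 1 \<le> \<mu> * x + sqrt (1 - \<mu>\<^sup>2) * y"
  shows "is_equilibrium \<mu> (x, y) (\<lambda>t. arccos \<mu>) (max (x - \<mu> / sqrt (1 - \<mu>\<^sup>2) * y) 0)"
proof -
  have cos: "cos (arccos \<mu>) = \<mu>"
    using assms(1,2) by (simp add: cos_arccos)
  have sin: "sin (arccos \<mu>) = sqrt (1 - \<mu>\<^sup>2)"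
    using assms(1,2) by (simp add: sin_arccos)
  have sin_pos: "0 < sin (arccos \<mu>)"
    using assms(1,2) by (simp add: sin abs_square_less_1)
  have "is_equilibrium (cos (arccos \<mu>)) (x, y) (\<lambda>_. arccos \<mu>)
      (max (x - cos (arccos \<mu>) / sin (arccos \<mu>) * y) 0)"
    using assms(1,3-5)
    by (intro is_equilibrium_interception sin_pos) (simp_all only: cos sin less_imp_le)
  then show ?thesis
    by (simp only: cos sin)
qed

end
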